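(* Let $a,b,c,d,P_{\max}>0$ and set $\beta=b(1+dP_{\max})$. Consider the frontier curve $\Phi_1$, given as the graph of $$h(r_2)=\log_2\!\left(1+\frac{aP_{\max}}{1+\frac{b}{c}(1+dP_{\max})(2^{r_2}-1)}\right),\qquad r_2\ge0,$$ which expresses $r_1$ as a function of $r_2$. Let $P_2=\frac1c(1+dP_{\max})(2^{r_2}-1)$ be the corresponding power of user 2. Then $$\operatorname{sign}\big(h''(r_2)\big)=\operatorname{sign}(P_2-Q_2),$$ where $$Q_2=\frac{\Re\!\left(\sqrt{(c-\beta)(c-\beta+acP_{\max})}\right)-\beta}{cb}.$$ In particular, $\Phi_1$ restricted to $P_2\in[0,P_{\max}]$ is convex if $Q_2\le0$ and concave if $Q_2\ge P_{\max}$. If $0<Q_2<P_{\max}$, it has a non-stationary inflection point at $P_2=Q_2$.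
   Context: The channel power gains are normalized by the noise variance: $a$ (direct gain of user 1), $b$ (interference gain from transmitter 2 at receiver 1), $c$ (direct gain of user 2), $d$ (interference gain from transmitter 1 at receiver 2). The rates are $R_1(P_1,P_2)=\log_2\!\left(1+\frac{aP_1}{1+bP_2}\right)$ and $R_2(P_1,P_2)=\log_2\!\left(1+\frac{cP_2}{1+dP_1}\right)$. The curve $\Phi_1$ is the set of rate pairs obtained with $P_1=P_{\max}$ and $P_2$ ranging over $[0,P_{\max}]$. $\Re$ denotes the real part. *)

theory Defs
  imports "HOL-Analysis.Analysis"
begin

definition frontier_h :: "real \<Rightarrow> real \<Rightarrow> real \<Rightarrow> real \<Rightarrow> real \<Rightarrow> real \<Rightarrow> real" where
  "frontier_h a b c d Pmax r2 =
     log 2 (1 + a * Pmax / (1 + (b / c) * (1 + d * Pmax) * (2 powr r2 - 1)))"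

definition power2_of :: "real \<Rightarrow> real \<Rightarrow> real \<Rightarrow> real \<Rightarrow> real" where
  "power2_of c d Pmax r2 = (1 / c) * (1 + d * Pmax) * (2 powr r2 - 1)"

definition beta_const :: "real \<Rightarrow> real \<Rightarrow> real \<Rightarrow> real" where
  "beta_const b d Pmax = b * (1 + d * Pmax)"

definition Q2_const :: "real \<Rightarrow> real \<Rightarrow> real \<Rightarrow> real \<Rightarrow> real \<Rightarrow> real" where
  "Q2_const a b c d Pmax =
     (let \<beta> = beta_const b d Pmax in
      (Re (csqrt (complex_of_real ((c - \<beta>) * (c - \<beta> + a * c * Pmax)))) - \<beta>) / (c * b))"

text \<open>Rate r_2 at which P_2 = Pmax (upper end of P_2 in [0,Pmax]).\<close>
definition r2_max :: "real \<Rightarrow> real \<Rightarrow> real \<Rightarrow> real" where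
  "r2_max c d Pmax = log 2 (1 + c * Pmax / (1 + d * Pmax))"

end

theory Submission
  imports Defs
begin

(* With K = (b/c)(1 + d Pmax) and A = a Pmax the frontier reads
   h(r) = log2 (1 + A / I(r)) where I(r) = 1 + K (2^r - 1) is the normalized
   interference-plus-noise level at receiver 1, i.e. I(r) = 1 + b P2(r).
   Differentiating twice gives
     h''(r) = K ln2 2^r ((m + A)/(I + A)^2 - m/I^2),   m = 1 - K,
   whose sign is that of the quadratic I^2 - 2 m I - m A; for I > 0 this in turn
   has the sign of I - m - Re sqrt(m (m + A)), the distance of I to the larger root.
   Since I - m - Re sqrt(m (m + A)) = b (P2 - Q2), the sign of h'' is that of
   P2 - Q2.  As P2 increases strictly from 0 (at r = 0) to Pmax (at r = r2_max),
   convexity, concavity and the inflection point follow from this sign rule. *)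

lemma Re_csqrt_of_real: "Re (csqrt (complex_of_real y)) = (if y \<ge> 0 then sqrt y else 0)"
  by (simp add: csqrt_of_real')

lemma Re_csqrt_scale:
  assumes "c \<ge> 0"
  shows "Re (csqrt (complex_of_real (c^2 * y))) = c * Re (csqrt (complex_of_real y))"
  unfolding Re_csqrt_of_real using assms by (auto simp: real_sqrt_mult zero_le_mult_iff)

lemma same_sgn_iff:
  fixes u v :: real
  assumes "sgn u = sgn v"
  shows "(u > 0 \<longleftrightarrow> v > 0) \<and> (u < 0 \<longleftrightarrow> v < 0) \<and> (u \<ge> 0 \<longleftrightarrow> v \<ge> 0) \<and> (u \<le> 0 \<longleftrightarrow> v \<le> 0)"
  using assms by (auto simp: sgn_real_def split: if_splits)

lemma sgn_difference_of_quotients: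
  fixes D A m :: real
  assumes "D > 0" and "A > 0"
  shows "sgn ((m + A) / (D + A)^2 - m / D^2) = sgn (D^2 - 2 * m * D - m * A)"
proof -
  have "D \<noteq> 0" "D + A \<noteq> 0" using assms by auto
  then have "(m + A) / (D + A)^2 - m / D^2 = A * (D^2 - 2 * m * D - m * A) / (D^2 * (D + A)^2)"
    by (simp add: divide_simps) (simp add: algebra_simps power2_eq_square)
  moreover have "D^2 * (D + A)^2 > 0" using assms by simp
  ultimately show ?thesis using assms by (simp add: sgn_mult sgn_divide)
qed

(* For D > 0 the quadratic D^2 - 2 m D - m A is negative exactly below its larger
   root m + Re sqrt(m (m + A)); if m (m + A) < 0 then m < 0 and it has no real
   root at all, consistently with Re sqrt = 0 and D - m > 0. *)
lemma sgn_quadratic_larger_root: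
  fixes D A m :: real
  assumes "D > 0" and "A > 0"
  shows "sgn (D^2 - 2 * m * D - m * A) = sgn (D - m - Re (csqrt (complex_of_real (m * (m + A)))))"
proof (cases "m * (m + A) \<ge> 0")
  case True
  define T where "T = sqrt (m * (m + A))"
  have T: "T^2 = m * (m + A)" "T \<ge> 0" using True by (auto simp: T_def)
  have other_root_below: "D - m + T > 0"
  proof (cases "m \<ge> 0")
    case True
    then have "m^2 \<le> T^2" using T assms by (simp add: power2_eq_square algebra_simps)
    then have "m \<le> T" using T by (meson power2_le_imp_le)
    then show ?thesis using assms by linarith
  next
    case False
    then show ?thesis using assms T by linarith
  qed
  have "D^2 - 2 * m * D - m * A = (D - m - T) * (D - m + T)"
    using T by (simp add: algebra_simps power2_eq_square)
  then show ?thesis using other_root_below True by (simp add: sgn_mult Re_csqrt_of_real T_def)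
next
  case False
  then have "m < 0" using assms mult_nonneg_nonneg[of m "m + A"] by force
  then have "m * D < 0" "m * A < 0" "D^2 > 0" using assms by (simp_all add: mult_neg_pos)
  moreover have "D^2 - 2 * m * D - m * A = D^2 - 2 * (m * D) - m * A" by simp
  ultimately have "D^2 - 2 * m * D - m * A > 0" by linarith
  then show ?thesis using False \<open>m < 0\<close> assms by (simp add: Re_csqrt_of_real)
qed

definition interference_plus_noise :: "real \<Rightarrow> real \<Rightarrow> real" where
  "interference_plus_noise K r = 1 + K * (2 powr r - 1)"

definition user1_rate :: "real \<Rightarrow> real \<Rightarrow> real \<Rightarrow> real" where
  "user1_rate K A r = log 2 (1 + A / interference_plus_noise K r)"

definition rate_slope :: "real \<Rightarrow> real \<Rightarrow> real \<Rightarrow> real" where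
  "rate_slope K A r =
     K * 2 powr r * (1 / (interference_plus_noise K r + A) - 1 / interference_plus_noise K r)"

definition rate_curvature :: "real \<Rightarrow> real \<Rightarrow> real \<Rightarrow> real" where
  "rate_curvature K A r = K * ln 2 * 2 powr r *
     ((1 - K + A) / (interference_plus_noise K r + A)^2 - (1 - K) / (interference_plus_noise K r)^2)"

(* For r2 \<ge> 0 the level I stays \<ge> 1, and the set where I > 0 is open; together
   these let pointwise derivative formulas be upgraded to statements about deriv. *)
lemma interference_plus_noise_ge_one:
  assumes "K \<ge> 0" and "r \<ge> 0"
  shows "interference_plus_noise K r \<ge> 1"
  using assms ge_one_powr_ge_zero[of 2 r] unfolding interference_plus_noise_def by simp

lemma open_interference_plus_noise_pos: "open {r. interference_plus_noise K r > 0}"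
  unfolding interference_plus_noise_def by (intro open_Collect_less continuous_intros) auto

lemma interference_plus_noise_has_deriv:
  "(interference_plus_noise K has_real_derivative K * ln 2 * 2 powr r) (at r)"
  unfolding interference_plus_noise_def[abs_def]
  by (auto intro!: derivative_eq_intros)

lemma user1_rate_has_deriv:
  assumes "interference_plus_noise K r > 0" and "A > 0"
  shows "(user1_rate K A has_real_derivative rate_slope K A r) (at r)"
proof -
  let ?I = "interference_plus_noise K r" and ?x = "2 powr r"
  have pos: "1 + A / ?I > 0" using assms by (simp add: add_pos_pos)
  have "(user1_rate K A has_real_derivative
      (- (A * (K * ln 2 * ?x)) / ?I^2) / ((1 + A / ?I) * ln 2)) (at r)"
    unfolding user1_rate_def[abs_def] using assms pos
    by (auto intro!: derivative_eq_intros interference_plus_noise_has_deriv simp: power2_eq_square)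
  moreover have "(- (A * (K * ln 2 * ?x)) / ?I^2) / ((1 + A / ?I) * ln 2) = rate_slope K A r"
  proof -
    have "?I \<noteq> 0" "?I + A \<noteq> 0" using assms by auto
    then show ?thesis unfolding rate_slope_def
      by (simp add: divide_simps) (simp add: algebra_simps power2_eq_square)
  qed
  ultimately show ?thesis by simp
qed

(* Second derivative; the numerators simplify because I(r) - K 2^r = 1 - K. *)
lemma rate_slope_has_deriv:
  assumes "interference_plus_noise K r > 0" and "A > 0"
  shows "(rate_slope K A has_real_derivative rate_curvature K A r) (at r)"
proof -
  let ?I = "interference_plus_noise K r" and ?x = "2 powr r"
  have "(rate_slope K A has_real_derivative
      K * (ln 2 * ?x) * (1 / (?I + A) - 1 / ?I)
      + K * ?x * (- (K * ln 2 * ?x) / (?I + A)^2 + (K * ln 2 * ?x) / ?I^2)) (at r)"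
    unfolding rate_slope_def[abs_def] using assms
    by (auto intro!: derivative_eq_intros interference_plus_noise_has_deriv simp: power2_eq_square)
  moreover have "K * (ln 2 * ?x) * (1 / (?I + A) - 1 / ?I)
      + K * ?x * (- (K * ln 2 * ?x) / (?I + A)^2 + (K * ln 2 * ?x) / ?I^2) = rate_curvature K A r"
  proof -
    have algebra: "K * (l * x) * (1 / (D + A) - 1 / D)
          + K * x * (- (K * l * x) / (D + A)^2 + (K * l * x) / D^2)
        = K * l * x * ((D - K * x + A) / (D + A)^2 - (D - K * x) / D^2)"
      if "D > 0" for D x l :: real
    proof -
      have "D \<noteq> 0" "D + A \<noteq> 0" using that assms(2) by auto
      then show ?thesis by (simp add: divide_simps) (simp add: algebra_simps power2_eq_square)
    qed
    have "?I - K * ?x = 1 - K" unfolding interference_plus_noise_def by (simp add: algebra_simps)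
    then show ?thesis unfolding rate_curvature_def algebra[OF assms(1)] by simp
  qed
  ultimately show ?thesis by simp
qed

lemma user1_rate_derivs:
  assumes "interference_plus_noise K r > 0" and "A > 0"
  shows "deriv (user1_rate K A) r = rate_slope K A r"
    and "(deriv (user1_rate K A) has_real_derivative rate_curvature K A r) (at r)"
proof -
  let ?S = "{s. interference_plus_noise K s > 0}"
  have deriv_eq: "deriv (user1_rate K A) s = rate_slope K A s" if "s \<in> ?S" for s
    using user1_rate_has_deriv that assms(2) by (simp add: DERIV_imp_deriv)
  then show "deriv (user1_rate K A) r = rate_slope K A r" using assms by simp
  show "(deriv (user1_rate K A) has_real_derivative rate_curvature K A r) (at r)"
    by (rule has_field_derivative_transform_within_open[OF rate_slope_has_deriv
          open_interference_plus_noise_pos]) (use assms deriv_eq in auto)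
qed

lemma rate_slope_neg:
  assumes "interference_plus_noise K r > 0" and "K > 0" and "A > 0"
  shows "rate_slope K A r < 0"
proof -
  have "1 / (interference_plus_noise K r + A) < 1 / interference_plus_noise K r"
    using assms by (simp add: divide_strict_left_mono)
  then show ?thesis unfolding rate_slope_def using assms by (simp add: mult_pos_neg)
qed

lemma rate_curvature_sgn:
  assumes "interference_plus_noise K r > 0" and "K > 0" and "A > 0"
  shows "sgn (rate_curvature K A r) = sgn (interference_plus_noise K r - (1 - K)
           - Re (csqrt (complex_of_real ((1 - K) * (1 - K + A)))))"
proof -
  let ?I = "interference_plus_noise K r"
  have "sgn (rate_curvature K A r) = sgn (((1 - K) + A) / (?I + A)^2 - (1 - K) / ?I^2)"
    unfolding rate_curvature_def using assms by (simp add: sgn_mult)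
  also have "\<dots> = sgn (?I^2 - 2 * (1 - K) * ?I - (1 - K) * A)"
    using sgn_difference_of_quotients assms by blast
  finally show ?thesis using sgn_quadratic_larger_root[of ?I A "1 - K"] assms
    by (simp add: add.assoc)
qed

(* The frontier of the paper is the normalized rate with K = (b/c)(1 + d Pmax)
   and A = a Pmax; the power of user 2 is (I(r) - 1)/b and the threshold Q2 is
   (Re sqrt(m (m + A)) - K)/b, because beta = c K. *)
lemma frontier_h_eq_user1_rate:
  "frontier_h a b c d Pmax = user1_rate ((b / c) * (1 + d * Pmax)) (a * Pmax)"
  unfolding frontier_h_def user1_rate_def interference_plus_noise_def by simp

lemma power2_of_eq:
  assumes "b > 0" and "c > 0"
  shows "power2_of c d Pmax r = (interference_plus_noise ((b / c) * (1 + d * Pmax)) r - 1) / b"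
  unfolding power2_of_def interference_plus_noise_def using assms by (simp add: field_simps)

lemma Q2_const_eq:
  fixes a b c d Pmax :: real
  assumes "b > 0" and "c > 0"
  defines "K \<equiv> (b / c) * (1 + d * Pmax)"
  shows "Q2_const a b c d Pmax =
           (Re (csqrt (complex_of_real ((1 - K) * (1 - K + a * Pmax)))) - K) / b"
proof -
  let ?y = "(1 - K) * (1 - K + a * Pmax)"
  have beta: "beta_const b d Pmax = c * K" unfolding beta_const_def K_def using assms by simp
  have "(c - c * K) * (c - c * K + a * c * Pmax) = c^2 * ?y"
    by (simp add: algebra_simps power2_eq_square)
  then have "Q2_const a b c d Pmax = (Re (csqrt (complex_of_real (c^2 * ?y))) - c * K) / (c * b)"
    unfolding Q2_const_def Let_def beta by simp
  also have "\<dots> = (c * (Re (csqrt (complex_of_real ?y)) - K)) / (c * b)"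
    unfolding Re_csqrt_scale[OF less_imp_le[OF assms(2)]] by (simp add: right_diff_distrib)
  also have "\<dots> = (Re (csqrt (complex_of_real ?y)) - K) / b"
    using assms by simp
  finally show ?thesis .
qed

lemma frontier_derivs_and_sign:
  fixes a b c d Pmax :: real
  assumes "a > 0" and "b > 0" and "c > 0" and "d > 0" and "Pmax > 0" and "r \<ge> 0"
  defines "h \<equiv> frontier_h a b c d Pmax"
  shows "(h has_real_derivative deriv h r) (at r)"
    and "(deriv h has_real_derivative deriv (deriv h) r) (at r)"
    and "deriv h r < 0"
    and "sgn (deriv (deriv h) r) = sgn (power2_of c d Pmax r - Q2_const a b c d Pmax)"
proof -
  define K where "K = (b / c) * (1 + d * Pmax)"
  define A where "A = a * Pmax"
  have K: "K > 0" and A: "A > 0" unfolding K_def A_def using assms by (simp_all add: add_pos_pos)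
  have I: "interference_plus_noise K r > 0"
    using interference_plus_noise_ge_one[of K r] K assms(6) by simp
  have h: "h = user1_rate K A" unfolding h_def K_def A_def by (rule frontier_h_eq_user1_rate)
  have slope: "deriv h r = rate_slope K A r" and
    curvature: "(deriv h has_real_derivative rate_curvature K A r) (at r)"
    unfolding h using user1_rate_derivs[OF I A] by auto
  show "(h has_real_derivative deriv h r) (at r)"
    unfolding slope unfolding h using user1_rate_has_deriv[OF I A] .
  show "(deriv h has_real_derivative deriv (deriv h) r) (at r)"
    using curvature DERIV_imp_deriv by fastforce
  show "deriv h r < 0" unfolding slope using rate_slope_neg[OF I K A] .
  have "interference_plus_noise K r - (1 - K) - Re (csqrt (complex_of_real ((1 - K) * (1 - K + A))))
      = b * (power2_of c d Pmax r - Q2_const a b c d Pmax)"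
    unfolding power2_of_eq[OF assms(2,3)] Q2_const_eq[OF assms(2,3)] K_def[symmetric] A_def
    using assms by (simp add: field_simps)
  then show "sgn (deriv (deriv h) r) = sgn (power2_of c d Pmax r - Q2_const a b c d Pmax)"
    using DERIV_imp_deriv[OF curvature] rate_curvature_sgn[OF I K A] assms(2)
    by (simp add: sgn_mult)
qed

lemma power2_of_less_iff:
  assumes "c > 0" and "d > 0" and "Pmax > 0"
  shows "power2_of c d Pmax r < power2_of c d Pmax s \<longleftrightarrow> r < s"
proof -
  have "(1 / c) * (1 + d * Pmax) > 0" using assms by (simp add: add_pos_pos)
  then have "power2_of c d Pmax r < power2_of c d Pmax s \<longleftrightarrow> 2 powr r - 1 < 2 powr s - 1"
    unfolding power2_of_def by (rule mult_less_cancel_left_pos)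
  then show ?thesis by simp
qed

lemma power2_of_zero: "power2_of c d Pmax 0 = 0"
  unfolding power2_of_def by simp

lemma power2_of_eq_iff:
  assumes "c > 0" and "d > 0" and "Pmax > 0" and "q > -(1 + d * Pmax) / c"
  shows "power2_of c d Pmax r = q \<longleftrightarrow> r = log 2 (1 + c * q / (1 + d * Pmax))"
proof -
  have dP: "1 + d * Pmax > 0" using assms by (simp add: add_pos_pos)
  have arg: "1 + c * q / (1 + d * Pmax) > 0"
    using assms dP by (simp add: field_simps)
  have "power2_of c d Pmax r = q \<longleftrightarrow> 2 powr r = 1 + c * q / (1 + d * Pmax)"
    unfolding power2_of_def using assms dP by (auto simp: field_simps)
  also have "\<dots> \<longleftrightarrow> r = log 2 (1 + c * q / (1 + d * Pmax))"
    using arg by (metis log_powr_cancel powr_log_cancel zero_less_numeral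
        numeral_One num.distinct(1) numeral_eq_iff)
  finally show ?thesis .
qed

lemma power2_of_r2_max:
  assumes "c > 0" and "d > 0" and "Pmax > 0"
  shows "power2_of c d Pmax (r2_max c d Pmax) = Pmax"
proof -
  have "-(1 + d * Pmax) / c < Pmax"
    using assms by (smt (verit) divide_neg_pos mult_pos_pos)
  then show ?thesis using power2_of_eq_iff[OF assms, of Pmax] unfolding r2_max_def by simp
qed

lemma power2_of_range:
  assumes "c > 0" and "d > 0" and "Pmax > 0" and "r \<in> {0..r2_max c d Pmax}"
  shows "0 \<le> power2_of c d Pmax r" and "power2_of c d Pmax r \<le> Pmax"
  using assms power2_of_less_iff[OF assms(1-3), of r 0]
    power2_of_less_iff[OF assms(1-3), of "r2_max c d Pmax" r]
  by (auto simp: power2_of_zero power2_of_r2_max[OF assms(1-3)])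

lemma power2_of_attains:
  assumes "c > 0" and "d > 0" and "Pmax > 0" and "0 < q" and "q < Pmax"
  obtains r where "r \<in> {0<..<r2_max c d Pmax}" and "power2_of c d Pmax r = q"
proof -
  define r where "r = log 2 (1 + c * q / (1 + d * Pmax))"
  have "-(1 + d * Pmax) / c < q"
    using assms by (smt (verit) divide_neg_pos mult_pos_pos)
  then have q: "power2_of c d Pmax r = q" using power2_of_eq_iff[OF assms(1-3)] r_def by blast
  then have "0 < r" and "r < r2_max c d Pmax"
    using assms power2_of_less_iff[OF assms(1-3)] power2_of_zero power2_of_r2_max[OF assms(1-3)]
    by metis+
  then show ?thesis using that q by simp
qed

theorem mainTheorem7:
  fixes a b c d Pmax :: real
  assumes "a > 0" and "b > 0" and "c > 0" and "d > 0" and "Pmax > 0"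
  defines "h \<equiv> frontier_h a b c d Pmax"
    and "Q2 \<equiv> Q2_const a b c d Pmax"
    and "R \<equiv> r2_max c d Pmax"
  shows "(\<forall>r2 \<ge> 0. sgn (deriv (deriv h) r2) = sgn (power2_of c d Pmax r2 - Q2))
     \<and> (Q2 \<le> 0 \<longrightarrow> convex_on {0..R} h)
     \<and> (Q2 \<ge> Pmax \<longrightarrow> concave_on {0..R} h)
     \<and> (0 < Q2 \<and> Q2 < Pmax \<longrightarrow>
          (\<exists>r2\<in>{0<..<R}. power2_of c d Pmax r2 = Q2
             \<and> deriv h r2 \<noteq> 0
             \<and> (\<forall>r\<in>{0..<r2}. deriv (deriv h) r < 0)
             \<and> (\<forall>r\<in>{r2<..R}. deriv (deriv h) r > 0)))"
proof -
  note frontier = frontier_derivs_and_sign[OF assms(1-5), folded h_def Q2_def]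
  note curvature_sign = same_sgn_iff[OF frontier(4)]
  note P2_range = power2_of_range[OF assms(3-5), folded R_def]
  have "convex_on {0..R} h" if "Q2 \<le> 0"
  proof (rule f''_ge0_imp_convex[where f' = "deriv h" and f'' = "deriv (deriv h)"])
    fix x assume "x \<in> {0..R}"
    then show "deriv (deriv h) x \<ge> 0"
      using curvature_sign P2_range(1)[of x] that by force
  qed (use frontier in auto)
  moreover have "concave_on {0..R} h" if "Q2 \<ge> Pmax"
  proof (rule f''_le0_imp_concave[where f' = "deriv h" and f'' = "deriv (deriv h)"])
    fix x assume "x \<in> {0..R}"
    then show "deriv (deriv h) x \<le> 0"
      using curvature_sign P2_range(2)[of x] that by force
  qed (use frontier in auto)
  moreover have "\<exists>r2\<in>{0<..<R}. power2_of c d Pmax r2 = Q2 \<and> deriv h r2 \<noteq> 0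
      \<and> (\<forall>r\<in>{0..<r2}. deriv (deriv h) r < 0) \<and> (\<forall>r\<in>{r2<..R}. deriv (deriv h) r > 0)"
    if Q2: "0 < Q2" "Q2 < Pmax"
  proof -
    obtain r2 where r2: "r2 \<in> {0<..<R}" "power2_of c d Pmax r2 = Q2"
      using power2_of_attains[OF assms(3-5) Q2] unfolding R_def by blast
    moreover have "deriv h r2 \<noteq> 0" using frontier(3)[of r2] r2 by simp
    ultimately show ?thesis
      using curvature_sign power2_of_less_iff[OF assms(3-5)] by (auto intro!: bexI[of _ r2])
  qed
  ultimately show ?thesis using frontier(4) by blast
qed

end
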